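(* Every unary FA-presentable quasi-order $(X,\le)$ decomposes as a finite disjoint union of trivial quasi-orders, countably infinite ascending chains, countably infinite descending chains, countably infinite anti-chains, and countably infinite strongly connected components; that is, $X$ can be partitioned into finitely many subsets, each of which, with the induced quasi-order, is either a one-element quasi-order, or a countably infinite set $\{x_1,x_2,\dots\}$ with $x_i\le x_j$ iff $i\le j$ (ascending chain), or one with $x_i\le x_j$ iff $i\ge j$ (descending chain), or a countably infinite set in which $x\le y$ only if $x=y$ (anti-chain), or a countably infinite set in which $x\le y$ for all $x,y$ (strongly connected component).
   Context: A quasi-order is a reflexive transitive binary relation. A structure $(X,\le)$ is unary FA-presentable if there exist a regular language $L\subseteq a^*$ over a one-letter alphabet and a surjection $\phi:L\to X$ such that both $\{(u,v)\in L^2: u\phi=v\phi\}$ and $\{(u,v)\in L^2:u\phi\le v\phi\}$ are regular relations, i.e. the corresponding sets of words $\mathrm{conv}(u,v)$ over $\{a,\$\}^2$ (reading $u$ and $v$ in parallel, padding the shorter with $\$$) are regular languages. *)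

theory Defs
  imports Main "HOL-Library.Disjoint_Sets" "HOL-Library.Countable_Set"
begin

definition regular_lang :: "'b list set \<Rightarrow> bool" where
  "regular_lang L \<longleftrightarrow>
     (\<exists>(N::nat) (q0::nat) (\<delta>::nat \<Rightarrow> 'b \<Rightarrow> nat) (F::nat set).
        q0 < N \<and> (\<forall>q b. q < N \<longrightarrow> \<delta> q b < N) \<and>
        L = {w. foldl \<delta> q0 w \<in> F})"

definition uword :: "nat \<Rightarrow> unit list" where
  "uword n = replicate n ()"

text \<open>Convolution of a^m and a^n over the alphabet {a,$}^2; a letter is a pair of
  booleans, True meaning 'a' and False meaning the padding symbol '$'.\<close>
definition uconv :: "nat \<Rightarrow> nat \<Rightarrow> (bool \<times> bool) list" where
  "uconv m n = map (\<lambda>i. (i < m, i < n)) [0..<max m n]"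

definition unary_regular_rel :: "(nat \<times> nat) set \<Rightarrow> bool" where
  "unary_regular_rel R \<longleftrightarrow> regular_lang ((\<lambda>(u, v). uconv u v) ` R)"

definition quasi_order_on :: "'a set \<Rightarrow> ('a \<Rightarrow> 'a \<Rightarrow> bool) \<Rightarrow> bool" where
  "quasi_order_on X le \<longleftrightarrow>
     (\<forall>x\<in>X. le x x) \<and> (\<forall>x\<in>X. \<forall>y\<in>X. \<forall>z\<in>X. le x y \<longrightarrow> le y z \<longrightarrow> le x z)"

definition unary_FA_presentable :: "'a set \<Rightarrow> ('a \<Rightarrow> 'a \<Rightarrow> bool) \<Rightarrow> bool" where
  "unary_FA_presentable X le \<longleftrightarrow>
     (\<exists>(L::nat set) (\<phi>::nat \<Rightarrow> 'a).
        regular_lang (uword ` L) \<and> \<phi> ` L = X \<and>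
        unary_regular_rel {(u, v). u \<in> L \<and> v \<in> L \<and> \<phi> u = \<phi> v} \<and>
        unary_regular_rel {(u, v). u \<in> L \<and> v \<in> L \<and> le (\<phi> u) (\<phi> v)})"

end

theory Submission
  imports Defs
begin

text \<open>
  Let a DFA read the convolution of \<open>a\<^sup>x\<close> and \<open>a\<^sup>y\<close>, \<open>x < y\<close>: it first reads \<open>(a,a)\<^sup>x\<close>, then
  \<open>($,a)\<^bsup>y-x\<^esup>\<close> (or \<open>(a,$)\<^bsup>y-x\<^esup>\<close> for the pair \<open>(y, x)\<close>). The states reached along each of
  these unary words are ultimately periodic, so there is a \<open>p > 0\<close> such that for
  \<open>p \<le> x < y\<close> with \<open>x \<equiv> y (mod p)\<close> the answers to \<open>x \<le> y\<close> and \<open>y \<le> x\<close> depend only on the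
  residue of \<open>x\<close>. Picking one representative word for every element makes the presentation
  injective. Enumerated increasingly,
  each residue class of representatives beyond \<open>p\<close> then carries a homogeneous relation: it is
  an ascending chain, a descending chain, an anti-chain or a single strongly connected component;
  the finitely many representatives below \<open>p\<close> become singletons.
\<close>

definition elementary_component :: "('a \<Rightarrow> 'a \<Rightarrow> bool) \<Rightarrow> 'a set \<Rightarrow> bool" where
  "elementary_component le C \<longleftrightarrow>
      card C = 1
    \<or> (\<exists>f::nat \<Rightarrow> 'a. bij_betw f UNIV C \<and> (\<forall>i j. le (f i) (f j) \<longleftrightarrow> i \<le> j))
    \<or> (\<exists>f::nat \<Rightarrow> 'a. bij_betw f UNIV C \<and> (\<forall>i j. le (f i) (f j) \<longleftrightarrow> i \<ge> j))
    \<or> (infinite C \<and> countable C \<and> (\<forall>x\<in>C. \<forall>y\<in>C. le x y \<longrightarrow> x = y))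
    \<or> (infinite C \<and> countable C \<and> (\<forall>x\<in>C. \<forall>y\<in>C. le x y))"

definition finitely_decomposable :: "('a \<Rightarrow> 'a \<Rightarrow> bool) \<Rightarrow> 'a set \<Rightarrow> bool" where
  "finitely_decomposable le S \<longleftrightarrow>
     (\<exists>P. finite P \<and> partition_on S P \<and> (\<forall>C\<in>P. elementary_component le C))"

lemma finitely_decomposable_finite: "finite S \<Longrightarrow> finitely_decomposable le S"
  unfolding finitely_decomposable_def
  by (rule exI[of _ "(\<lambda>x. {x}) ` S"]) (auto simp: partition_on_singletons elementary_component_def)

lemma finitely_decomposable_Union:
  assumes "finite \<A>" and "disjoint \<A>" and "\<And>A. A \<in> \<A> \<Longrightarrow> finitely_decomposable le A"
  shows "finitely_decomposable le (\<Union>\<A>)"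
proof -
  obtain P where P: "\<And>A. A \<in> \<A> \<Longrightarrow>
      finite (P A) \<and> partition_on A (P A) \<and> (\<forall>C\<in>P A. elementary_component le C)"
    using assms(3) unfolding finitely_decomposable_def by metis
  have "partition_on (\<Union>\<A>) (\<Union>A\<in>\<A>. P A)"
  proof (rule partition_onI)
    show "\<Union>(\<Union>A\<in>\<A>. P A) = \<Union>\<A>"
      using P[THEN conjunct2, THEN conjunct1, THEN partition_onD1] by blast
    show "{} \<notin> (\<Union>A\<in>\<A>. P A)"
      using P by (auto dest: partition_onD3)
    fix C D assume "C \<in> (\<Union>A\<in>\<A>. P A)" "D \<in> (\<Union>A\<in>\<A>. P A)" "C \<noteq> D"
    then obtain A B where AB: "A \<in> \<A>" "B \<in> \<A>" "C \<in> P A" "D \<in> P B" by blast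
    show "disjnt C D"
    proof (cases "A = B")
      case True
      then show ?thesis
        using P[OF AB(1)] AB \<open>C \<noteq> D\<close> by (auto dest: partition_onD2 disjointD simp: disjnt_def)
    next
      case False
      have "C \<subseteq> A" "D \<subseteq> B"
        using P[OF AB(1)] P[OF AB(2)] AB(3,4) by (auto dest: partition_onD1)
      then show ?thesis
        using False AB(1,2) assms(2) by (auto simp: disjnt_def dest: disjointD)
    qed
  qed
  then show ?thesis
    using P assms(1) unfolding finitely_decomposable_def
    by (intro exI[of _ "\<Union>A\<in>\<A>. P A"]) auto
qed

lemma elementary_component_of_pattern:
  fixes h :: "nat \<Rightarrow> 'a"
  assumes bij: "bij_betw h UNIV C"
    and pattern: "\<And>i j. le (h i) (h j) \<longleftrightarrow> i = j \<or> (i < j \<and> a) \<or> (j < i \<and> b)"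
  shows "elementary_component le C"
proof -
  have range: "C = range h"
    using bij by (simp add: bij_betw_def)
  have C: "infinite C" "countable C"
    using bij_betw_finite[OF bij] range by simp_all
  consider "a" "b" | "a" "\<not> b" | "\<not> a" "b" | "\<not> a" "\<not> b" by blast
  then show ?thesis
  proof cases
    case 1
    then have "le (h i) (h j)" for i j
      using pattern by (cases i j rule: linorder_cases) auto
    then have "\<forall>x\<in>C. \<forall>y\<in>C. le x y"
      using range by blast
    then show ?thesis using C unfolding elementary_component_def by simp
  next
    case 2
    then have "\<forall>i j. le (h i) (h j) \<longleftrightarrow> i \<le> j" using pattern by auto
    then show ?thesis using bij unfolding elementary_component_def by metis
  next
    case 3
    then have "\<forall>i j. le (h i) (h j) \<longleftrightarrow> i \<ge> j" using pattern by auto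
    then show ?thesis using bij unfolding elementary_component_def by metis
  next
    case 4
    then have "le (h i) (h j) \<Longrightarrow> h i = h j" for i j
      using pattern by auto
    then have "\<forall>x\<in>C. \<forall>y\<in>C. le x y \<longrightarrow> x = y"
      using range by blast
    then show ?thesis using C unfolding elementary_component_def by simp
  qed
qed

lemma finitely_decomposable_homogeneous_image:
  fixes g :: "nat \<Rightarrow> 'a"
  assumes inj: "inj_on g B"
    and refl: "\<And>x. x \<in> B \<Longrightarrow> le (g x) (g x)"
    and homogeneous: "\<And>x y x' y'. \<lbrakk>x \<in> B; y \<in> B; x' \<in> B; y' \<in> B; x < y; x' < y'\<rbrakk> \<Longrightarrow>
      (le (g x) (g y) \<longleftrightarrow> le (g x') (g y')) \<and> (le (g y) (g x) \<longleftrightarrow> le (g y') (g x'))"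
  shows "finitely_decomposable le (g ` B)"
proof (cases "finite B")
  case True
  then show ?thesis by (simp add: finitely_decomposable_finite)
next
  case False
  define e where "e = enumerate B"
  have e: "e i \<in> B" "e i < e j \<longleftrightarrow> i < j" for i j
    using False by (simp_all add: e_def enumerate_in_set)
  have bij: "bij_betw (g \<circ> e) UNIV (g ` B)"
    unfolding e_def using bij_enumerate[OF False] inj by (rule bij_betw_trans[OF _ inj_on_imp_bij_betw])
  define a b where "a = le (g (e 0)) (g (e 1))" and "b = le (g (e 1)) (g (e 0))"
  have "le ((g \<circ> e) i) ((g \<circ> e) j) \<longleftrightarrow> i = j \<or> (i < j \<and> a) \<or> (j < i \<and> b)" for i j
  proof (cases i j rule: linorder_cases)
    case less
    then show ?thesis using homogeneous[of "e i" "e j" "e 0" "e 1"] e by (simp add: a_def)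
  next
    case equal
    then show ?thesis using refl e by simp
  next
    case greater
    then show ?thesis using homogeneous[of "e j" "e i" "e 0" "e 1"] e by (simp add: b_def)
  qed
  then have "elementary_component le (g ` B)"
    by (rule elementary_component_of_pattern[OF bij])
  moreover have "g ` B \<noteq> {}" using e(1) by blast
  ultimately show ?thesis unfolding finitely_decomposable_def
    by (intro exI[of _ "{g ` B}"]) (simp add: partition_on_space)
qed

lemma finitely_decomposable_periodic_image:
  fixes g :: "nat \<Rightarrow> 'a"
  assumes "p > 0" and inj: "inj_on g A" and refl: "\<And>x. x \<in> A \<Longrightarrow> le (g x) (g x)"
    and periodic: "\<And>x y x' y'. \<lbrakk>x \<in> A; y \<in> A; x' \<in> A; y' \<in> A; p \<le> x; x < y; p \<le> x'; x' < y';
        x mod p = y mod p; x' mod p = y' mod p; x mod p = x' mod p\<rbrakk> \<Longrightarrow>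
      (le (g x) (g y) \<longleftrightarrow> le (g x') (g y')) \<and> (le (g y) (g x) \<longleftrightarrow> le (g y') (g x'))"
  shows "finitely_decomposable le (g ` A)"
proof -
  define cls where "cls x = (if x < p then p else x mod p)" for x
  define B where "B k = {x \<in> A. cls x = k}" for k
  have "cls x \<le> p" and cls_eq_p: "cls x = p \<longleftrightarrow> x < p" for x
    using mod_less_divisor[OF \<open>p > 0\<close>, of x] by (auto simp: cls_def)
  then have A: "A = (\<Union>k\<le>p. B k)"
    by (auto simp: B_def)
  have "disjoint_family_on B {..p}"
    by (auto simp: disjoint_family_on_def B_def)
  then have "disjoint ((`) g ` B ` {..p})"
    using inj A by (intro disjoint_image disjoint_family_on_disjoint_image) simp_all
  moreover have "finitely_decomposable le (g ` B k)" if "k \<le> p" for k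
  proof (cases "k = p")
    case True
    then have "B k \<subseteq> {..<p}"
      by (auto simp: B_def cls_eq_p)
    then show ?thesis by (simp add: finite_subset finitely_decomposable_finite)
  next
    case False
    then have B: "B k = {x \<in> A. p \<le> x \<and> x mod p = k}"
      using that by (auto simp: B_def cls_def)
    show ?thesis
    proof (rule finitely_decomposable_homogeneous_image)
      show "inj_on g (B k)" using inj by (rule inj_on_subset) (auto simp: B)
      show "le (g x) (g x)" if "x \<in> B k" for x using that refl by (simp add: B)
      fix x y x' y' assume "x \<in> B k" "y \<in> B k" "x' \<in> B k" "y' \<in> B k" "x < y" "x' < y'"
      then show "(le (g x) (g y) \<longleftrightarrow> le (g x') (g y')) \<and> (le (g y) (g x) \<longleftrightarrow> le (g y') (g x'))"
        unfolding B by (intro periodic) simp_all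
    qed
  qed
  ultimately have "finitely_decomposable le (\<Union>((`) g ` B ` {..p}))"
    by (intro finitely_decomposable_Union) blast+
  then show ?thesis
    using A by (simp add: image_UN image_image)
qed

lemma iterate_eventually_periodic:
  fixes s :: "nat \<Rightarrow> 'b"
  assumes step: "\<And>n. s (Suc n) = G (s n)" and fin: "finite (range s)"
  obtains t c where "c > 0" "\<And>x y. t \<le> x \<Longrightarrow> t \<le> y \<Longrightarrow> x mod c = y mod c \<Longrightarrow> s x = s y"
proof -
  obtain t u where tu: "t < u" "s t = s u"
    using fin by (metis finite_imageD infinite_UNIV_nat inj_onI linorder_neq_iff)
  have shift: "s (t + k) = s (u + k)" for k
    by (induction k) (use tu in \<open>simp_all add: step\<close>)
  define c where "c = u - t"
  have cycle: "s (n + m * c) = s n" if "t \<le> n" for n m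
  proof (induction m)
    case (Suc m)
    have "n + Suc m * c = u + (n + m * c - t)" using that tu by (simp add: c_def)
    moreover have "n + m * c = t + (n + m * c - t)" using that by simp
    ultimately show ?case using shift Suc by metis
  qed simp
  have ordered: "s x = s y" if xy: "t \<le> x" "x \<le> y" "x mod c = y mod c" for x y
  proof -
    obtain m where "y = x + m * c"
      using xy(2,3) by (metis le_add_diff_inverse mod_eq_dvd_iff_nat dvd_def mult.commute)
    then show ?thesis using cycle xy(1) by simp
  qed
  show thesis
  proof (rule that[where c = c and t = t])
    show "c > 0" using tu by (simp add: c_def)
    fix x y assume "t \<le> x" "t \<le> y" "x mod c = y mod c"
    then show "s x = s y"
      using ordered[of x y] ordered[of y x] nat_le_linear[of x y] by argo
  qed
qed

lemma foldl_closed: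
  "q < N \<Longrightarrow> \<forall>q b. q < N \<longrightarrow> \<delta> q b < N \<Longrightarrow> foldl \<delta> q w < N"
  by (induction w arbitrary: q) auto

lemma foldl_replicate_eventually_periodic:
  fixes \<delta> :: "nat \<Rightarrow> 'b \<Rightarrow> nat"
  assumes closed: "\<forall>q b. q < N \<longrightarrow> \<delta> q b < N"
  obtains t c where "c > 0"
    "\<And>x y q. t \<le> x \<Longrightarrow> t \<le> y \<Longrightarrow> x mod c = y mod c \<Longrightarrow> q < N \<Longrightarrow>
       foldl \<delta> q (replicate x a) = foldl \<delta> q (replicate y a)"
proof -
  \<comment> \<open>Following all start states at once gives an iteration with finite range.\<close>
  define s where "s n = map (\<lambda>q. foldl \<delta> q (replicate n a)) [0..<N]" for n
  have step: "s (Suc n) = map (\<lambda>q. \<delta> q a) (s n)" for n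
    by (simp add: s_def replicate_append_same[symmetric])
  have "range s \<subseteq> {xs. set xs \<subseteq> {..<N} \<and> length xs = N}"
    using foldl_closed[OF _ closed] by (auto simp: s_def)
  then have fin: "finite (range s)"
    by (rule finite_subset) (simp add: finite_lists_length_eq)
  obtain c t where "c > 0" and periodic: "\<And>x y. t \<le> x \<Longrightarrow> t \<le> y \<Longrightarrow> x mod c = y mod c \<Longrightarrow> s x = s y"
    using iterate_eventually_periodic[OF step fin] by metis
  have as_nth: "foldl \<delta> q (replicate n a) = s n ! q" if "q < N" for n q
    using that by (simp add: s_def)
  show thesis
  proof (rule that[OF \<open>c > 0\<close>])
    fix x y q assume "t \<le> x" "t \<le> y" "x mod c = y mod c" "q < N"
    then show "foldl \<delta> q (replicate x a) = foldl \<delta> q (replicate y a)"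
      using periodic[of x y] as_nth by simp
  qed
qed

lemma uconv_add_right: "uconv x (x + d) = replicate x (True, True) @ replicate d (False, True)"
  by (rule nth_equalityI) (auto simp: uconv_def nth_append)

lemma uconv_add_left: "uconv (x + d) x = replicate x (True, True) @ replicate d (True, False)"
  by (rule nth_equalityI) (auto simp: uconv_def nth_append)

lemma length_filter_uconv:
  "length (filter fst (uconv m n)) = m \<and> length (filter snd (uconv m n)) = n"
proof (cases "m \<le> n")
  case True
  then obtain d where "n = m + d" using le_iff_add by blast
  then show ?thesis by (simp add: uconv_add_right filter_replicate)
next
  case False
  then obtain d where "m = n + d" using le_iff_add nat_le_linear by blast
  then show ?thesis by (simp add: uconv_add_left filter_replicate)
qed

lemma uconv_inject: "uconv m n = uconv m' n' \<longleftrightarrow> m = m' \<and> n = n'"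
  by (metis length_filter_uconv)

lemma unary_regular_rel_dfa:
  assumes "unary_regular_rel R"
  obtains N q0 and \<delta> :: "nat \<Rightarrow> bool \<times> bool \<Rightarrow> nat" and F
  where "q0 < N" "\<forall>q b. q < N \<longrightarrow> \<delta> q b < N"
    "\<And>u v. (u, v) \<in> R \<longleftrightarrow> foldl \<delta> q0 (uconv u v) \<in> F"
proof -
  obtain N q0 and \<delta> :: "nat \<Rightarrow> bool \<times> bool \<Rightarrow> nat" and F where dfa: "q0 < N" "\<forall>q b. q < N \<longrightarrow> \<delta> q b < N"
    and lang: "(\<lambda>(u, v). uconv u v) ` R = {w. foldl \<delta> q0 w \<in> F}"
    using assms unfolding unary_regular_rel_def regular_lang_def by blast
  have "(u, v) \<in> R \<longleftrightarrow> uconv u v \<in> (\<lambda>(u, v). uconv u v) ` R" for u v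
    by (force simp: uconv_inject)
  then show thesis
    using that[OF dfa] lang by simp
qed

lemma unary_regular_rel_periodic:
  assumes "unary_regular_rel R"
  obtains p where "p > 0"
    "\<And>x y x' y'. \<lbrakk>p \<le> x; x < y; p \<le> x'; x' < y';
        x mod p = y mod p; x' mod p = y' mod p; x mod p = x' mod p\<rbrakk> \<Longrightarrow>
      ((x, y) \<in> R \<longleftrightarrow> (x', y') \<in> R) \<and> ((y, x) \<in> R \<longleftrightarrow> (y', x') \<in> R)"
proof -
  obtain N q0 and \<delta> :: "nat \<Rightarrow> bool \<times> bool \<Rightarrow> nat" and F where q0: "q0 < N"
    and closed: "\<forall>q b. q < N \<longrightarrow> \<delta> q b < N"
    and lang: "\<And>u v. (u, v) \<in> R \<longleftrightarrow> foldl \<delta> q0 (uconv u v) \<in> F"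
    using unary_regular_rel_dfa[OF assms] by metis
  obtain c1 t1 where "c1 > 0" and per1: "\<And>x y q. t1 \<le> x \<Longrightarrow> t1 \<le> y \<Longrightarrow> x mod c1 = y mod c1 \<Longrightarrow>
      q < N \<Longrightarrow> foldl \<delta> q (replicate x (True, True)) = foldl \<delta> q (replicate y (True, True))"
    using foldl_replicate_eventually_periodic[OF closed] by metis
  obtain c2 t2 where "c2 > 0" and per2: "\<And>x y q. t2 \<le> x \<Longrightarrow> t2 \<le> y \<Longrightarrow> x mod c2 = y mod c2 \<Longrightarrow>
      q < N \<Longrightarrow> foldl \<delta> q (replicate x (False, True)) = foldl \<delta> q (replicate y (False, True))"
    using foldl_replicate_eventually_periodic[OF closed] by metis
  obtain c3 t3 where "c3 > 0" and per3: "\<And>x y q. t3 \<le> x \<Longrightarrow> t3 \<le> y \<Longrightarrow> x mod c3 = y mod c3 \<Longrightarrow>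
      q < N \<Longrightarrow> foldl \<delta> q (replicate x (True, False)) = foldl \<delta> q (replicate y (True, False))"
    using foldl_replicate_eventually_periodic[OF closed] by metis
  define p where "p = (t1 + t2 + t3 + 1) * (c1 * c2 * c3)"
  have "p > 0" using \<open>c1 > 0\<close> \<open>c2 > 0\<close> \<open>c3 > 0\<close> by (simp add: p_def)
  have "(t1 + t2 + t3 + 1) * 1 \<le> p"
    unfolding p_def using \<open>c1 > 0\<close> \<open>c2 > 0\<close> \<open>c3 > 0\<close> by (intro mult_le_mono2) simp
  then have thresholds: "t1 \<le> p" "t2 \<le> p" "t3 \<le> p" by simp_all
  have periods: "c1 dvd p" "c2 dvd p" "c3 dvd p" by (simp_all add: p_def)
  define state where "state x = foldl \<delta> q0 (replicate x (True, True))" for x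
  have state_closed: "state x < N" for x unfolding state_def using q0 closed by (rule foldl_closed)
  have right: "(x, x + d) \<in> R \<longleftrightarrow> foldl \<delta> (state x) (replicate d (False, True)) \<in> F" for x d
    by (simp add: lang uconv_add_right state_def)
  have left: "(x + d, x) \<in> R \<longleftrightarrow> foldl \<delta> (state x) (replicate d (True, False)) \<in> F" for x d
    by (simp add: lang uconv_add_left state_def)
  show thesis
  proof (rule that[OF \<open>p > 0\<close>])
    fix x y x' y'
    assume "p \<le> x" "x < y" "p \<le> x'" "x' < y'"
      and "x mod p = y mod p" "x' mod p = y' mod p" "x mod p = x' mod p"
    define d d' where "d = y - x" and "d' = y' - x'"
    have y: "y = x + d" "y' = x' + d'" using \<open>x < y\<close> \<open>x' < y'\<close> by (simp_all add: d_def d'_def)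
    have "p dvd d" "p dvd d'"
      using \<open>x mod p = y mod p\<close> \<open>x' mod p = y' mod p\<close> \<open>x < y\<close> \<open>x' < y'\<close>
        mod_eq_dvd_iff_nat[of x y p] mod_eq_dvd_iff_nat[of x' y' p]
      by (simp_all add: d_def d'_def)
    then have "p \<le> d" "p \<le> d'"
      using \<open>x < y\<close> \<open>x' < y'\<close> by (simp_all add: d_def d'_def dvd_imp_le)
    have res_d: "d mod c = d' mod c" if "c dvd p" for c
      using \<open>p dvd d\<close> \<open>p dvd d'\<close> that by (metis dvd_imp_mod_0 dvd_trans)
    have res_x: "x mod c = x' mod c" if "c dvd p" for c
      using \<open>x mod p = x' mod p\<close> that by (metis mod_mod_cancel)
    have state_eq: "state x = state x'"
      unfolding state_def using thresholds \<open>p \<le> x\<close> \<open>p \<le> x'\<close> res_x[OF periods(1)] q0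
      by (intro per1) simp_all
    have right_eq: "foldl \<delta> q (replicate d (False, True)) = foldl \<delta> q (replicate d' (False, True))"
      if "q < N" for q
      using thresholds \<open>p \<le> d\<close> \<open>p \<le> d'\<close> res_d[OF periods(2)] that by (intro per2) simp_all
    have left_eq: "foldl \<delta> q (replicate d (True, False)) = foldl \<delta> q (replicate d' (True, False))"
      if "q < N" for q
      using thresholds \<open>p \<le> d\<close> \<open>p \<le> d'\<close> res_d[OF periods(3)] that by (intro per3) simp_all
    show "((x, y) \<in> R \<longleftrightarrow> (x', y') \<in> R) \<and> ((y, x) \<in> R \<longleftrightarrow> (y', x') \<in> R)"
      unfolding y right left state_eq using right_eq left_eq state_closed[of x'] by simp
  qed
qed

lemma inj_on_subset_same_image:
  obtains B where "B \<subseteq> A" "f ` B = f ` A" "inj_on f B"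
proof
  show "inv_into A f ` f ` A \<subseteq> A" by (auto intro: inv_into_into)
  show "f ` inv_into A f ` f ` A = f ` A" by (rule image_inv_into_cancel[OF refl subset_refl])
  show "inj_on f (inv_into A f ` f ` A)"
    by (rule inj_on_inverseI[where g = "inv_into A f"]) (auto simp: f_inv_into_f)
qed

theorem corollary5p9:
  fixes X :: "'a set" and le :: "'a \<Rightarrow> 'a \<Rightarrow> bool"
  assumes "quasi_order_on X le"
    and "unary_FA_presentable X le"
  shows "\<exists>P. finite P \<and> partition_on X P \<and>
     (\<forall>C\<in>P.
        card C = 1
      \<or> (\<exists>f::nat \<Rightarrow> 'a. bij_betw f UNIV C \<and> (\<forall>i j. le (f i) (f j) \<longleftrightarrow> i \<le> j))
      \<or> (\<exists>f::nat \<Rightarrow> 'a. bij_betw f UNIV C \<and> (\<forall>i j. le (f i) (f j) \<longleftrightarrow> i \<ge> j))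
      \<or> (infinite C \<and> countable C \<and> (\<forall>x\<in>C. \<forall>y\<in>C. le x y \<longrightarrow> x = y))
      \<or> (infinite C \<and> countable C \<and> (\<forall>x\<in>C. \<forall>y\<in>C. le x y)))"
proof -
  obtain L :: "nat set" and \<phi> :: "nat \<Rightarrow> 'a" where "\<phi> ` L = X"
    and R: "unary_regular_rel {(u, v). u \<in> L \<and> v \<in> L \<and> le (\<phi> u) (\<phi> v)}" (is "unary_regular_rel ?R")
    using assms(2) unfolding unary_FA_presentable_def by blast
  obtain p where "p > 0" and periodic: "\<And>x y x' y'. \<lbrakk>p \<le> x; x < y; p \<le> x'; x' < y';
        x mod p = y mod p; x' mod p = y' mod p; x mod p = x' mod p\<rbrakk> \<Longrightarrow>
      ((x, y) \<in> ?R \<longleftrightarrow> (x', y') \<in> ?R) \<and> ((y, x) \<in> ?R \<longleftrightarrow> (y', x') \<in> ?R)"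
    using unary_regular_rel_periodic[OF R] by blast
  obtain L' where "L' \<subseteq> L" "\<phi> ` L' = X" "inj_on \<phi> L'"
    using inj_on_subset_same_image[of L \<phi>] \<open>\<phi> ` L = X\<close> by metis
  have "finitely_decomposable le (\<phi> ` L')"
  proof (rule finitely_decomposable_periodic_image[OF \<open>p > 0\<close> \<open>inj_on \<phi> L'\<close>])
    show "le (\<phi> x) (\<phi> x)" if "x \<in> L'" for x
      using assms(1) \<open>\<phi> ` L' = X\<close> that unfolding quasi_order_on_def by blast
    fix x y x' y' assume "x \<in> L'" "y \<in> L'" "x' \<in> L'" "y' \<in> L'"
      and "p \<le> x" "x < y" "p \<le> x'" "x' < y'"
      and "x mod p = y mod p" "x' mod p = y' mod p" "x mod p = x' mod p"
    moreover from \<open>L' \<subseteq> L\<close> \<open>x \<in> L'\<close> \<open>y \<in> L'\<close> \<open>x' \<in> L'\<close> \<open>y' \<in> L'\<close>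
    have "x \<in> L" "y \<in> L" "x' \<in> L" "y' \<in> L" by blast+
    ultimately show "(le (\<phi> x) (\<phi> y) \<longleftrightarrow> le (\<phi> x') (\<phi> y')) \<and> (le (\<phi> y) (\<phi> x) \<longleftrightarrow> le (\<phi> y') (\<phi> x'))"
      using periodic[of x y x' y'] by simp
  qed
  then show ?thesis
    using \<open>\<phi> ` L' = X\<close> unfolding finitely_decomposable_def elementary_component_def by simp
qed

end
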